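(* Let $A$ be a vertex of a cube $\mathcal C$ and let $S$ be the union of the three faces of $\mathcal C$ not containing $A$. If $f\colon\mathcal C\to\mathbb{R}$ is convex, then $$\operatorname{Avg}(f,\mathcal C)\le\frac14f(A)+\frac34\operatorname{Avg}(f,S),\qquad \operatorname{Avg}(f,h_A^{3/4}(S))\le\operatorname{Avg}(f,\mathcal C).$$
   Context: $\operatorname{Avg}(f,\mathcal C)$ is the average over the cube with respect to volume; averages over $S$ and $h_A^{3/4}(S)$ are with respect to surface area. $h_A^\lambda(\mathbf x)=A+\lambda(\mathbf x-A)$ is the homothety with center $A$ and ratio $\lambda$. *)

theory Defs
  imports "HOL-Analysis.Analysis"
begin

definition cube :: "real^3 \<Rightarrow> real^3 \<Rightarrow> real^3 \<Rightarrow> real^3 \<Rightarrow> (real^3) set" where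
  "cube A u v w = {A + s *\<^sub>R u + t *\<^sub>R v + r *\<^sub>R w | s t r.
      s \<in> {0..1} \<and> t \<in> {0..1} \<and> r \<in> {0..1}}"

definition vol_avg :: "(real^3 \<Rightarrow> real) \<Rightarrow> (real^3) set \<Rightarrow> real" where
  "vol_avg f K = integral K f / measure lebesgue K"

text \<open>A flat parallelogram face given by a corner P and edge vectors x, y:
  the set {P + s x + t y | s,t in [0,1]}.\<close>
type_synonym face = "(real^3) \<times> (real^3) \<times> (real^3)"

definition face_param :: "face \<Rightarrow> real \<times> real \<Rightarrow> real^3" where
  "face_param F st = (\<lambda>(P, x, y). P + fst st *\<^sub>R x + snd st *\<^sub>R y) F"

text \<open>Surface area of the face (= Jacobian of the affine parametrization).\<close>
definition face_area :: "face \<Rightarrow> real" where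
  "face_area F = (\<lambda>(P, x, y). sqrt ((norm x)\<^sup>2 * (norm y)\<^sup>2 - (x \<bullet> y)\<^sup>2)) F"

definition face_integral :: "(real^3 \<Rightarrow> real) \<Rightarrow> face \<Rightarrow> real" where
  "face_integral f F = face_area F * integral (cbox (0,0) (1,1)) (\<lambda>st. f (face_param F st))"

text \<open>Average of f with respect to surface area over a polyhedral surface which is the
  union of the given faces (the faces are assumed to overlap only in null sets, i.e. edges).\<close>
definition surface_avg :: "(real^3 \<Rightarrow> real) \<Rightarrow> face list \<Rightarrow> real" where
  "surface_avg f Fs = (\<Sum>F\<leftarrow>Fs. face_integral f F) / (\<Sum>F\<leftarrow>Fs. face_area F)"

text \<open>The three faces of the cube not containing the vertex A (their union is S).\<close>
definition far_faces :: "real^3 \<Rightarrow> real^3 \<Rightarrow> real^3 \<Rightarrow> real^3 \<Rightarrow> face list" where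
  "far_faces A u v w = [(A + u, v, w), (A + v, u, w), (A + w, u, v)]"

definition homothety :: "real^3 \<Rightarrow> real \<Rightarrow> real^3 \<Rightarrow> real^3" where
  "homothety A lam x = A + lam *\<^sub>R (x - A)"

definition homothety_face :: "real^3 \<Rightarrow> real \<Rightarrow> face \<Rightarrow> face" where
  "homothety_face A lam F = (\<lambda>(P, x, y). (homothety A lam P, lam *\<^sub>R x, lam *\<^sub>R y)) F"

lemma face_param_homothety:
  "face_param (homothety_face A lam F) st = homothety A lam (face_param F st)"
  by (cases F) (auto simp: face_param_def homothety_face_def homothety_def algebra_simps)

end

theory Submission
  imports Defs
begin

text \<open>Put \<open>A\<close> at the origin and use the edge vectors as coordinates, so that the cube becomes
  \<open>[0,1]\<^sup>3\<close> and \<open>S\<close> the union of its three faces \<open>x\<^sub>i = 1\<close>. The cube is the union of the three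
  pyramids with apex \<open>A\<close> over these faces. For such a face \<open>e\<close> let \<open>\<Phi>\<^sub>e(s)\<close> be the average of
  \<open>f\<close> over \<open>e\<close> shrunk towards \<open>A\<close> by the factor \<open>s\<close>; this is the slice of the pyramid at height
  \<open>s\<close>, of area \<open>s\<^sup>2\<close> times that of \<open>e\<close>. Hence the average of \<open>f\<close> over the cube is
  \<open>\<Sum>\<^sub>e \<integral>\<^sub>0\<^sup>1 s\<^sup>2 \<Phi>\<^sub>e(s) ds\<close>, while its averages over \<open>S\<close> and over the image of \<open>S\<close> under the
  homothety of ratio \<open>3/4\<close> are \<open>(1/3) \<Sum>\<^sub>e \<Phi>\<^sub>e(1)\<close> and \<open>(1/3) \<Sum>\<^sub>e \<Phi>\<^sub>e(3/4)\<close>.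
  Each \<open>\<Phi>\<^sub>e\<close> is convex with \<open>\<Phi>\<^sub>e(0) = f(A)\<close>. Bounding \<open>\<Phi>\<^sub>e\<close> by its chord gives the first
  inequality; the second is Jensen's inequality for the probability density \<open>3s\<^sup>2\<close> on \<open>[0,1]\<close>,
  whose mean is \<open>3/4\<close>.\<close>

section \<open>Convex functions of one variable against the weight \<open>s\<^sup>2\<close>\<close>

lemma has_integral_square_cube_01:
  "((\<lambda>s::real. \<alpha> * s\<^sup>2 + \<beta> * s ^ 3) has_integral \<alpha> / 3 + \<beta> / 4) {0..1}"
proof -
  have "((\<lambda>s::real. \<alpha> * s\<^sup>2 + \<beta> * s ^ 3) has_integral
      (\<alpha> / 3 * 1 ^ 3 + \<beta> / 4 * 1 ^ 4) - (\<alpha> / 3 * 0 ^ 3 + \<beta> / 4 * 0 ^ 4)) {0..1}"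
    by (intro fundamental_theorem_of_calculus)
       (auto intro!: derivative_eq_intros simp flip: has_real_derivative_iff_has_vector_derivative
         simp: power2_eq_square power3_eq_cube)
  then show ?thesis by simp
qed

lemma convex_on_supporting_line:
  fixes \<phi> :: "real \<Rightarrow> real"
  assumes cvx: "convex_on {a..b} \<phi>" and "a < c" "c < b"
  obtains m where "\<And>s. s \<in> {a..b} \<Longrightarrow> \<phi> c + m * (s - c) \<le> \<phi> s"
proof -
  have slope_le: "(\<phi> c - \<phi> s) / (c - s) \<le> (\<phi> t - \<phi> c) / (t - c)"
    if "a \<le> s" "s < c" "c < t" "t \<le> b" for s t
    using convex_on_slope_le[OF cvx, of s t c] that
    by (simp add: minus_divide_divide[symmetric, of "\<phi> s - \<phi> c"] minus_divide_divide[symmetric, of "\<phi> c - \<phi> t"])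
  define m where "m = (SUP s\<in>{a..<c}. (\<phi> c - \<phi> s) / (c - s))"
  have bdd: "bdd_above ((\<lambda>s. (\<phi> c - \<phi> s) / (c - s)) ` {a..<c})"
    using slope_le[of _ b] \<open>c < b\<close> by (auto intro!: bdd_aboveI2)
  have "\<phi> c + m * (s - c) \<le> \<phi> s" if "s \<in> {a..b}" for s
  proof (cases s c rule: linorder_cases)
    case less
    then have "(\<phi> c - \<phi> s) / (c - s) \<le> m"
      unfolding m_def using that by (intro cSUP_upper[OF _ bdd]) auto
    with less show ?thesis by (simp add: divide_le_eq algebra_simps)
  next
    case greater
    then have "m \<le> (\<phi> s - \<phi> c) / (s - c)"
      unfolding m_def using that \<open>a < c\<close> by (intro cSUP_least) (auto intro: slope_le)
    with greater show ?thesis by (simp add: le_divide_eq algebra_simps)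
  qed simp
  then show ?thesis using that by blast
qed

lemma integral_square_weight_le_endpoints:
  fixes \<phi> :: "real \<Rightarrow> real"
  assumes cvx: "convex_on {0..1} \<phi>" and int: "(\<lambda>s. s\<^sup>2 * \<phi> s) integrable_on {0..1}"
  shows "integral {0..1} (\<lambda>s. s\<^sup>2 * \<phi> s) \<le> \<phi> 0 / 12 + \<phi> 1 / 4"
proof -
  have chord: "((\<lambda>s. \<phi> 0 * s\<^sup>2 + (\<phi> 1 - \<phi> 0) * s ^ 3) has_integral \<phi> 0 / 12 + \<phi> 1 / 4) {0..1}"
    using has_integral_square_cube_01[of "\<phi> 0" "\<phi> 1 - \<phi> 0"] by (simp add: field_simps)
  have "s\<^sup>2 * \<phi> s \<le> \<phi> 0 * s\<^sup>2 + (\<phi> 1 - \<phi> 0) * s ^ 3" if "s \<in> {0..1}" for s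
  proof -
    have "\<phi> s \<le> (1 - s) * \<phi> 0 + s * \<phi> 1"
      using convex_onD_Icc[OF cvx, of s] that by simp
    then have "s\<^sup>2 * \<phi> s \<le> s\<^sup>2 * ((1 - s) * \<phi> 0 + s * \<phi> 1)"
      by (rule mult_left_mono) simp
    then show ?thesis by (simp add: algebra_simps power2_eq_square power3_eq_cube)
  qed
  then show ?thesis
    using has_integral_le[OF integrable_integral[OF int] chord] by blast
qed

lemma le_integral_square_weight:
  fixes \<phi> :: "real \<Rightarrow> real"
  assumes cvx: "convex_on {0..1} \<phi>" and int: "(\<lambda>s. s\<^sup>2 * \<phi> s) integrable_on {0..1}"
  shows "\<phi> (3/4) \<le> 3 * integral {0..1} (\<lambda>s. s\<^sup>2 * \<phi> s)"
proof -
  obtain m where m: "\<And>s. s \<in> {0..1} \<Longrightarrow> \<phi> (3/4) + m * (s - 3/4) \<le> \<phi> s"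
    using convex_on_supporting_line[OF cvx, of "3/4"] by auto
  have tangent: "((\<lambda>s. (\<phi> (3/4) - 3/4 * m) * s\<^sup>2 + m * s ^ 3) has_integral \<phi> (3/4) / 3) {0..1}"
    using has_integral_square_cube_01[of "\<phi> (3/4) - 3/4 * m" m] by (simp add: field_simps)
  have "(\<phi> (3/4) - 3/4 * m) * s\<^sup>2 + m * s ^ 3 \<le> s\<^sup>2 * \<phi> s" if "s \<in> {0..1}" for s
  proof -
    have "s\<^sup>2 * (\<phi> (3/4) + m * (s - 3/4)) \<le> s\<^sup>2 * \<phi> s"
      using m[OF that] by (rule mult_left_mono) simp
    then show ?thesis by (simp add: algebra_simps power2_eq_square power3_eq_cube)
  qed
  then show ?thesis
    using has_integral_le[OF tangent integrable_integral[OF int]] by simp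
qed

section \<open>Convex functions on boxes\<close>

lemma convex_on_cbox_bounded:
  fixes g :: "'a::euclidean_space \<Rightarrow> real"
  assumes cvx: "convex_on (cbox a b) g"
  obtains B where "\<And>x. x \<in> cbox a b \<Longrightarrow> \<bar>g x\<bar> \<le> B"
proof -
  obtain V where "finite V" and V: "cbox a b = convex hull V"
    by (rule closed_interval_as_convex_hull)
  define M where "M = Max (insert 0 (g ` V))"
  have upper: "g x \<le> M" if "x \<in> cbox a b" for x
    using convex_on_convex_hull_bound[of V g M] cvx that \<open>finite V\<close> by (auto simp: V M_def)
  define c where "c = (1/2) *\<^sub>R (a + b)"
  \<comment> \<open>a lower bound comes from reflecting \<open>x\<close> through the centre \<open>c\<close>\<close>
  have lower: "2 * g c - M \<le> g x" if x: "x \<in> cbox a b" for x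
  proof -
    have x': "a + b - x \<in> cbox a b"
      using x by (auto simp: mem_box inner_diff_left inner_add_left)
    have "g c = g ((1 - 1/2) *\<^sub>R x + (1/2) *\<^sub>R (a + b - x))"
      by (simp add: c_def algebra_simps)
    also have "\<dots> \<le> (1 - 1/2) * g x + (1/2) * g (a + b - x)"
      using x x' by (intro convex_onD[OF cvx]) auto
    finally show ?thesis using upper[OF x'] by simp
  qed
  show ?thesis
    using upper lower by (intro that[of "\<bar>M\<bar> + 2 * \<bar>g c\<bar>"]) fastforce
qed

lemma integrable_lborel_indicator_open_bounded:
  fixes g :: "'a::euclidean_space \<Rightarrow> real"
  assumes "open \<Omega>" "bounded \<Omega>" "continuous_on \<Omega> g" "\<And>x. x \<in> \<Omega> \<Longrightarrow> \<bar>g x\<bar> \<le> B"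
  shows "integrable lborel (\<lambda>x. indicator \<Omega> x * g x)"
proof -
  have "(\<lambda>x. indicator \<Omega> x *\<^sub>R g x) \<in> borel_measurable borel"
    using assms by (intro borel_measurable_continuous_on_indicator) auto
  then have "integrable lborel (\<lambda>x. indicator \<Omega> x *\<^sub>R g x)"
    using assms emeasure_bounded_finite
    by (intro integrableI_bounded_set[where A=\<Omega> and B=B]) (auto simp: indicator_def)
  then show ?thesis by simp
qed

lemma has_integral_open_bounded_lborel:
  fixes g :: "'a::euclidean_space \<Rightarrow> real"
  assumes "open \<Omega>" "bounded \<Omega>" "continuous_on \<Omega> g" "\<And>x. x \<in> \<Omega> \<Longrightarrow> \<bar>g x\<bar> \<le> B"
  shows "(g has_integral (LINT x|lborel. indicator \<Omega> x * g x)) \<Omega>"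
proof -
  have "(\<lambda>x. indicator \<Omega> x * g x) = (\<lambda>x. if x \<in> \<Omega> then g x else 0)"
    by (auto simp: indicator_def)
  then show ?thesis
    using has_integral_integral_lborel[OF integrable_lborel_indicator_open_bounded[OF assms]]
    by (simp add: has_integral_restrict_UNIV)
qed

lemma convex_on_cbox_integrable:
  fixes g :: "'a::euclidean_space \<Rightarrow> real"
  assumes cvx: "convex_on (cbox a b) g"
  shows "g integrable_on cbox a b"
proof -
  obtain B where "\<And>x. x \<in> cbox a b \<Longrightarrow> \<bar>g x\<bar> \<le> B"
    using convex_on_cbox_bounded[OF cvx] by blast
  moreover have "continuous_on (box a b) g"
    using convex_on_subset[OF cvx box_subset_cbox] by (intro convex_on_continuous) (auto simp: convex_box)
  ultimately have "g integrable_on box a b"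
    using has_integral_open_bounded_lborel[of "box a b" g B] box_subset_cbox
    by (meson open_box bounded_box has_integral_integrable subsetD)
  then show ?thesis
    by (simp add: integrable_on_open_interval)
qed

section \<open>The unit cube as a union of three pyramids\<close>

lemma negligible_hyperplane_triple:
  assumes "(a, b, c) \<noteq> (0::real, 0::real, 0::real)"
  shows "negligible {p :: real \<times> real \<times> real. a * fst p + b * fst (snd p) + c * snd (snd p) = d}"
proof -
  have "negligible {p. (a, b, c) \<bullet> p = d}"
    using assms by (intro negligible_hyperplane) (auto simp: zero_prod_def)
  then show ?thesis by (simp add: inner_prod_def add.assoc)
qed

lemma box_Pair_eq: "box (a, c) (b, d) = box a b \<times> box c d"
  by (auto simp: mem_box Basis_prod_def ball_Un inner_Pair_0)

definition unit_cube :: "(real \<times> real \<times> real) set" where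
  "unit_cube = cbox (0, 0, 0) (1, 1, 1)"

definition face_x :: "real \<times> real \<Rightarrow> real \<times> real \<times> real" where
  "face_x q = (1, fst q, snd q)"

definition face_y :: "real \<times> real \<Rightarrow> real \<times> real \<times> real" where
  "face_y q = (fst q, 1, snd q)"

definition face_z :: "real \<times> real \<Rightarrow> real \<times> real \<times> real" where
  "face_z q = (fst q, snd q, 1)"

text \<open>\<open>cone_slice g e s\<close> is \<open>\<Phi>\<^sub>e(s)\<close>, the face \<open>e\<close> being parametrised over the unit square.\<close>

definition cone_slice ::
    "(real \<times> real \<times> real \<Rightarrow> real) \<Rightarrow> (real \<times> real \<Rightarrow> real \<times> real \<times> real) \<Rightarrow> real \<Rightarrow> real" where
  "cone_slice g e s = integral (cbox (0, 0) (1, 1)) (\<lambda>q. g (s *\<^sub>R e q))"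

definition pyramid_x :: "(real \<times> real \<times> real) set" where
  "pyramid_x = {p \<in> unit_cube. fst (snd p) \<le> fst p \<and> snd (snd p) \<le> fst p}"

definition pyramid_x_interior :: "(real \<times> real \<times> real) set" where
  "pyramid_x_interior = {p. 0 < fst p \<and> fst p < 1 \<and> 0 < fst (snd p) \<and> fst (snd p) < fst p
     \<and> 0 < snd (snd p) \<and> snd (snd p) < fst p}"

lemma mem_cbox_triple:
  fixes x u v :: "real \<times> real \<times> real"
  shows "x \<in> cbox u v \<longleftrightarrow> fst u \<le> fst x \<and> fst x \<le> fst v \<and> fst (snd u) \<le> fst (snd x)
    \<and> fst (snd x) \<le> fst (snd v) \<and> snd (snd u) \<le> snd (snd x) \<and> snd (snd x) \<le> snd (snd v)"
  by (cases u; cases v; cases x) (auto simp: cbox_Pair_eq)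

lemma mem_box_triple:
  fixes x u v :: "real \<times> real \<times> real"
  shows "x \<in> box u v \<longleftrightarrow> fst u < fst x \<and> fst x < fst v \<and> fst (snd u) < fst (snd x)
    \<and> fst (snd x) < fst (snd v) \<and> snd (snd u) < snd (snd x) \<and> snd (snd x) < snd (snd v)"
  by (cases u; cases v; cases x) (auto simp: box_Pair_eq box_real)

lemma lborel_integral_slice_pyramid_x:
  fixes g :: "real \<times> real \<times> real \<Rightarrow> real"
  assumes cont: "continuous_on (box (0, 0, 0) (1, 1, 1)) g"
    and bound: "\<And>p. p \<in> unit_cube \<Longrightarrow> \<bar>g p\<bar> \<le> B"
  shows "(LBINT q. indicator pyramid_x_interior (s, q) * g (s, q))
    = indicator {0<..<1} s * (s\<^sup>2 * cone_slice g face_x s)"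
proof (cases "0 < s \<and> s < 1")
  case False
  then show ?thesis by (auto simp: pyramid_x_interior_def)
next
  case True
  define Q where "Q = box (0::real, 0::real) (s, s)"
  have "indicator pyramid_x_interior (s, q) = (indicator Q q :: real)" for q
    using True by (auto simp: pyramid_x_interior_def Q_def box_Pair_eq indicator_def mem_Times_iff)
  moreover have "((\<lambda>q. g (s, q)) has_integral (LBINT q. indicator Q q * g (s, q))) (cbox (0, 0) (s, s))"
  proof -
    have "continuous_on Q (\<lambda>q. g (s, q))"
      using True by (intro continuous_on_compose2[OF cont]) (auto intro!: continuous_intros
          simp: Q_def mem_box_triple box_Pair_eq)
    moreover have "\<bar>g (s, q)\<bar> \<le> B" if "q \<in> Q" for q
      using True that bound by (auto simp: Q_def unit_cube_def mem_cbox_triple box_Pair_eq)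
    ultimately show ?thesis
      using has_integral_open_bounded_lborel[of Q "\<lambda>q. g (s, q)" B]
      by (simp add: Q_def has_integral_open_interval open_box)
  qed
  from has_integral_affinity'[OF this, of s 0]
  have "((\<lambda>q. g (s *\<^sub>R face_x q)) has_integral (LBINT q. indicator Q q * g (s, q)) / s\<^sup>2) (cbox (0, 0) (1, 1))"
    using True by (simp add: face_x_def scaleR_prod_def divide_inverse_commute power2_eq_square)
  ultimately show ?thesis
    using True by (simp add: cone_slice_def integral_unique)
qed

lemma has_integral_pyramid_x_interior:
  fixes g :: "real \<times> real \<times> real \<Rightarrow> real"
  assumes cont: "continuous_on (box (0, 0, 0) (1, 1, 1)) g"
    and bound: "\<And>p. p \<in> unit_cube \<Longrightarrow> \<bar>g p\<bar> \<le> B"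
  shows "(g has_integral integral {0..1} (\<lambda>s. s\<^sup>2 * cone_slice g face_x s)) pyramid_x_interior"
    and "(\<lambda>s. s\<^sup>2 * cone_slice g face_x s) integrable_on {0..1}"
proof -
  have sub: "pyramid_x_interior \<subseteq> box (0, 0, 0) (1, 1, 1)"
    by (auto simp: pyramid_x_interior_def mem_box_triple)
  have hyps: "open pyramid_x_interior" "bounded pyramid_x_interior" "continuous_on pyramid_x_interior g"
      "\<And>p. p \<in> pyramid_x_interior \<Longrightarrow> \<bar>g p\<bar> \<le> B"
  proof -
    show "open pyramid_x_interior"
      unfolding pyramid_x_interior_def by (intro open_Collect_conj open_Collect_less continuous_intros)
    show "bounded pyramid_x_interior"
      using sub bounded_box bounded_subset by blast
    show "continuous_on pyramid_x_interior g"
      using cont sub continuous_on_subset by blast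
    show "\<And>p. p \<in> pyramid_x_interior \<Longrightarrow> \<bar>g p\<bar> \<le> B"
      using bound sub box_subset_cbox unfolding unit_cube_def by blast
  qed
  have int3: "integrable (lborel \<Otimes>\<^sub>M lborel) (\<lambda>p. indicator pyramid_x_interior p * g p)"
    using integrable_lborel_indicator_open_bounded[OF hyps] by (simp only: lborel_prod)
  note has3 = has_integral_open_bounded_lborel[OF hyps]
  note slice = lborel_integral_slice_pyramid_x[OF cont bound]
  define \<phi> where "\<phi> = (\<lambda>s. s\<^sup>2 * cone_slice g face_x s)"
  have fubini: "(LINT p|lborel. indicator pyramid_x_interior p * g p) = (LBINT s. indicator {0<..<1} s * \<phi> s)"
    using lborel_pair.integral_fst'[OF int3] by (simp add: slice lborel_prod \<phi>_def)
  have "integrable lborel (\<lambda>s. indicator {0<..<1} s * \<phi> s)"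
    using lborel_pair.integrable_fst'[OF int3] by (simp add: slice \<phi>_def)
  from has_integral_integral_lborel[OF this]
  have "(\<phi> has_integral (LBINT s. indicator {0<..<1} s * \<phi> s)) {0<..<1}"
    by (simp only: indicator_times_eq_if(1) has_integral_restrict_UNIV)
  then have "(\<phi> has_integral (LBINT s. indicator {0<..<1} s * \<phi> s)) {0..1}"
    by (metis box_real(1) cbox_interval has_integral_open_interval)
  with has3 show "(g has_integral integral {0..1} (\<lambda>s. s\<^sup>2 * cone_slice g face_x s)) pyramid_x_interior"
    and "(\<lambda>s. s\<^sup>2 * cone_slice g face_x s) integrable_on {0..1}"
    unfolding \<phi>_def[symmetric] by (auto simp: fubini integral_unique)
qed

lemma has_integral_pyramid_x:
  fixes g :: "real \<times> real \<times> real \<Rightarrow> real"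
  assumes "continuous_on (box (0, 0, 0) (1, 1, 1)) g" "\<And>p. p \<in> unit_cube \<Longrightarrow> \<bar>g p\<bar> \<le> B"
  shows "(g has_integral integral {0..1} (\<lambda>s. s\<^sup>2 * cone_slice g face_x s)) pyramid_x"
proof -
  let ?H = "\<lambda>a b c d. {p :: real \<times> real \<times> real. a * fst p + b * fst (snd p) + c * snd (snd p) = d}"
  have "pyramid_x - pyramid_x_interior
      \<subseteq> ?H 1 0 0 0 \<union> ?H 1 0 0 1 \<union> ?H 0 1 0 0 \<union> ?H (-1) 1 0 0 \<union> ?H 0 0 1 0 \<union> ?H (-1) 0 1 0"
    by (auto simp: pyramid_x_def pyramid_x_interior_def unit_cube_def mem_cbox_triple)
  moreover have "negligible (?H 1 0 0 0 \<union> ?H 1 0 0 1 \<union> ?H 0 1 0 0 \<union> ?H (-1) 1 0 0 \<union> ?H 0 0 1 0 \<union> ?H (-1) 0 1 0)"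
    by (intro negligible_Un negligible_hyperplane_triple) auto
  ultimately have "negligible (pyramid_x - pyramid_x_interior)"
    by (rule negligible_subset[rotated])
  moreover have "pyramid_x_interior \<subseteq> pyramid_x"
    by (auto simp: pyramid_x_def pyramid_x_interior_def unit_cube_def mem_cbox_triple)
  ultimately have "negligible {x \<in> pyramid_x_interior - pyramid_x. g x \<noteq> 0}"
    and "negligible {x \<in> pyramid_x - pyramid_x_interior. g x \<noteq> 0}"
    by (auto intro: negligible_subset)
  with has_integral_pyramid_x_interior(1)[OF assms] show ?thesis
    using has_integral_spike_set_eq by blast
qed

lemma image_eq_preimage_inverse:
  assumes "\<And>x. s (t x) = x" "\<And>x. t (s x) = x"
  shows "s ` A = {x. t x \<in> A}"
  using assms by (auto simp: image_iff) metis

lemma has_integral_permute_unit_cube: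
  fixes \<sigma> \<tau> :: "real \<times> real \<times> real \<Rightarrow> real \<times> real \<times> real"
    and g :: "real \<times> real \<times> real \<Rightarrow> 'a::banach"
  assumes inverse: "\<And>x. \<sigma> (\<tau> x) = x" "\<And>x. \<tau> (\<sigma> x) = x"
    and cont: "\<And>x. continuous (at x) \<tau>"
    and boxes: "\<And>u v. \<sigma> ` cbox u v = cbox (\<sigma> u) (\<sigma> v)" "\<And>u v. \<tau> ` cbox u v = cbox (\<tau> u) (\<tau> v)"
    and content: "\<And>u v. Henstock_Kurzweil_Integration.content (cbox (\<tau> u) (\<tau> v))
      = Henstock_Kurzweil_Integration.content (cbox u v)"
    and cube: "\<sigma> ` unit_cube = unit_cube" and D: "D \<subseteq> unit_cube"
    and int: "((\<lambda>x. g (\<sigma> x)) has_integral i) D"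
  shows "(g has_integral i) (\<sigma> ` D)"
proof -
  have restricted: "((\<lambda>x. if x \<in> D then g (\<sigma> x) else 0) has_integral i) unit_cube"
    using has_integral_restrict[OF D, of "\<lambda>x. g (\<sigma> x)"] int by blast
  have "((\<lambda>x. if \<tau> x \<in> D then g (\<sigma> (\<tau> x)) else 0) has_integral (1 / 1) *\<^sub>R i) (\<sigma> ` unit_cube)"
    unfolding unit_cube_def
  proof (rule has_integral_twiddle[where g=\<tau> and h=\<sigma> and r=1])
    show "\<exists>w z. \<sigma> ` cbox u v = cbox w z" "\<exists>w z. \<tau> ` cbox u v = cbox w z" for u v
      using boxes by blast+
  qed (use inverse cont content boxes restricted in \<open>simp_all add: unit_cube_def\<close>)
  moreover have "(\<lambda>x. if \<tau> x \<in> D then g (\<sigma> (\<tau> x)) else 0) = (\<lambda>x. if x \<in> \<sigma> ` D then g x else 0)"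
    by (simp add: inverse image_eq_preimage_inverse[OF inverse] cong: if_cong)
  ultimately have "((\<lambda>x. if x \<in> \<sigma> ` D then g x else 0) has_integral i) unit_cube"
    by (simp add: cube)
  moreover have "\<sigma> ` D \<subseteq> unit_cube"
    using D cube by blast
  ultimately show ?thesis
    using has_integral_restrict by blast
qed

definition swap12 :: "real \<times> real \<times> real \<Rightarrow> real \<times> real \<times> real" where
  "swap12 p = (fst (snd p), fst p, snd (snd p))"

definition rotate3 :: "real \<times> real \<times> real \<Rightarrow> real \<times> real \<times> real" where
  "rotate3 p = (fst (snd p), snd (snd p), fst p)"

definition rotate3_inv :: "real \<times> real \<times> real \<Rightarrow> real \<times> real \<times> real" where
  "rotate3_inv p = (snd (snd p), fst p, fst (snd p))"

lemma content_cbox_triple: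
  fixes u v :: "real \<times> real \<times> real"
  shows "Henstock_Kurzweil_Integration.content (cbox u v) =
    Henstock_Kurzweil_Integration.content {fst u..fst v} *
    (Henstock_Kurzweil_Integration.content {fst (snd u)..fst (snd v)} *
     Henstock_Kurzweil_Integration.content {snd (snd u)..snd (snd v)})"
  by (cases u; cases v) (simp add: content_Pair)

lemma swap12_swap12 [simp]: "swap12 (swap12 x) = x"
  and rotate3_rotate3_inv [simp]: "rotate3 (rotate3_inv x) = x"
  and rotate3_inv_rotate3 [simp]: "rotate3_inv (rotate3 x) = x"
  by (simp_all add: swap12_def rotate3_def rotate3_inv_def)

lemma image_cbox_permutations:
  "swap12 ` cbox u v = cbox (swap12 u) (swap12 v)"
  "rotate3 ` cbox u v = cbox (rotate3 u) (rotate3 v)"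
  "rotate3_inv ` cbox u v = cbox (rotate3_inv u) (rotate3_inv v)"
  by (simp_all add: image_eq_preimage_inverse[of swap12 swap12]
      image_eq_preimage_inverse[of rotate3 rotate3_inv] image_eq_preimage_inverse[of rotate3_inv rotate3])
     (auto simp: mem_cbox_triple swap12_def rotate3_def rotate3_inv_def)

lemma unit_cube_permutations:
  "swap12 ` unit_cube = unit_cube" "rotate3 ` unit_cube = unit_cube"
  unfolding unit_cube_def image_cbox_permutations by (simp_all add: swap12_def rotate3_def)

lemma has_integral_swap12_image:
  fixes g :: "real \<times> real \<times> real \<Rightarrow> 'a::banach"
  assumes "D \<subseteq> unit_cube" "((\<lambda>x. g (swap12 x)) has_integral i) D"
  shows "(g has_integral i) (swap12 ` D)"
proof (rule has_integral_permute_unit_cube[where \<tau>=swap12])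
  show "continuous (at x) swap12" for x
    unfolding swap12_def by (intro continuous_intros)
  show "Henstock_Kurzweil_Integration.content (cbox (swap12 u) (swap12 v))
      = Henstock_Kurzweil_Integration.content (cbox u v)" for u v
    by (simp add: content_cbox_triple swap12_def)
qed (use assms in \<open>simp_all add: image_cbox_permutations unit_cube_permutations\<close>)

lemma has_integral_rotate3_image:
  fixes g :: "real \<times> real \<times> real \<Rightarrow> 'a::banach"
  assumes "D \<subseteq> unit_cube" "((\<lambda>x. g (rotate3 x)) has_integral i) D"
  shows "(g has_integral i) (rotate3 ` D)"
proof (rule has_integral_permute_unit_cube[where \<tau>=rotate3_inv])
  show "continuous (at x) rotate3_inv" for x
    unfolding rotate3_inv_def by (intro continuous_intros)
  show "Henstock_Kurzweil_Integration.content (cbox (rotate3_inv u) (rotate3_inv v))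
      = Henstock_Kurzweil_Integration.content (cbox u v)" for u v
    by (simp add: content_cbox_triple rotate3_inv_def mult_ac)
qed (use assms in \<open>simp_all add: image_cbox_permutations unit_cube_permutations\<close>)

lemma continuous_bounded_comp_permutation:
  fixes g :: "real \<times> real \<times> real \<Rightarrow> real"
  assumes \<sigma>: "\<sigma> \<in> {swap12, rotate3}"
    and cont: "continuous_on (box (0, 0, 0) (1, 1, 1)) g" and bound: "\<And>p. p \<in> unit_cube \<Longrightarrow> \<bar>g p\<bar> \<le> B"
  shows "continuous_on (box (0, 0, 0) (1, 1, 1)) (\<lambda>x. g (\<sigma> x))"
    and "\<And>p. p \<in> unit_cube \<Longrightarrow> \<bar>g (\<sigma> p)\<bar> \<le> B"
proof -
  have "continuous_on UNIV \<sigma>" "\<sigma> ` box (0, 0, 0) (1, 1, 1) \<subseteq> box (0, 0, 0) (1, 1, 1)"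
    using \<sigma> by (auto intro!: continuous_intros simp: swap12_def rotate3_def mem_box_triple)
  then show "continuous_on (box (0, 0, 0) (1, 1, 1)) (\<lambda>x. g (\<sigma> x))"
    by (intro continuous_on_compose2[OF cont]) (auto intro: continuous_on_subset)
  show "\<And>p. p \<in> unit_cube \<Longrightarrow> \<bar>g (\<sigma> p)\<bar> \<le> B"
    using \<sigma> bound unit_cube_permutations by blast
qed

lemma cone_slice_permutations:
  "cone_slice (\<lambda>x. g (swap12 x)) face_x = cone_slice g face_y"
  "cone_slice (\<lambda>x. g (rotate3 x)) face_x = cone_slice g face_z"
  by (simp_all add: fun_eq_iff cone_slice_def face_x_def face_y_def face_z_def swap12_def rotate3_def)

lemma unit_cube_pyramid_decomposition:
  "pyramid_x \<union> swap12 ` pyramid_x \<union> rotate3 ` pyramid_x = unit_cube"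
  "negligible (pyramid_x \<inter> swap12 ` pyramid_x)"
  "negligible ((pyramid_x \<union> swap12 ` pyramid_x) \<inter> rotate3 ` pyramid_x)"
proof -
  have swap12_pyramid: "swap12 ` pyramid_x = {p \<in> unit_cube. fst p \<le> fst (snd p) \<and> snd (snd p) \<le> fst (snd p)}"
    unfolding image_eq_preimage_inverse[of swap12 swap12, OF swap12_swap12 swap12_swap12]
    by (auto simp: pyramid_x_def unit_cube_def mem_cbox_triple swap12_def)
  have rotate3_pyramid: "rotate3 ` pyramid_x = {p \<in> unit_cube. fst p \<le> snd (snd p) \<and> fst (snd p) \<le> snd (snd p)}"
    unfolding image_eq_preimage_inverse[of rotate3 rotate3_inv, OF rotate3_rotate3_inv rotate3_inv_rotate3]
    by (auto simp: pyramid_x_def unit_cube_def mem_cbox_triple rotate3_inv_def)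
  show "negligible (pyramid_x \<inter> swap12 ` pyramid_x)"
    by (rule negligible_subset[OF negligible_hyperplane_triple[of 1 "-1" 0 0]])
       (unfold swap12_pyramid, auto simp: pyramid_x_def)
  show "negligible ((pyramid_x \<union> swap12 ` pyramid_x) \<inter> rotate3 ` pyramid_x)"
    by (rule negligible_subset[OF negligible_Un[OF negligible_hyperplane_triple[of 1 0 "-1" 0]
          negligible_hyperplane_triple[of 0 1 "-1" 0]]])
       (unfold swap12_pyramid rotate3_pyramid, auto simp: pyramid_x_def)
  show "pyramid_x \<union> swap12 ` pyramid_x \<union> rotate3 ` pyramid_x = unit_cube"
    unfolding swap12_pyramid rotate3_pyramid by (auto simp: pyramid_x_def)
qed

lemma has_integral_unit_cube_pyramids:
  fixes g :: "real \<times> real \<times> real \<Rightarrow> real"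
  assumes cont: "continuous_on (box (0, 0, 0) (1, 1, 1)) g" and bound: "\<And>p. p \<in> unit_cube \<Longrightarrow> \<bar>g p\<bar> \<le> B"
  shows "(g has_integral integral {0..1} (\<lambda>s. s\<^sup>2 * cone_slice g face_x s)
      + integral {0..1} (\<lambda>s. s\<^sup>2 * cone_slice g face_y s)
      + integral {0..1} (\<lambda>s. s\<^sup>2 * cone_slice g face_z s)) unit_cube"
    and "e \<in> {face_x, face_y, face_z} \<Longrightarrow> (\<lambda>s. s\<^sup>2 * cone_slice g e s) integrable_on {0..1}"
proof -
  note swapped = continuous_bounded_comp_permutation[of swap12, OF _ cont bound, simplified]
  note rotated = continuous_bounded_comp_permutation[of rotate3, OF _ cont bound, simplified]
  have pyramid_sub: "pyramid_x \<subseteq> unit_cube"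
    by (auto simp: pyramid_x_def)
  have x: "(g has_integral integral {0..1} (\<lambda>s. s\<^sup>2 * cone_slice g face_x s)) pyramid_x"
    by (rule has_integral_pyramid_x[OF cont bound])
  have y: "(g has_integral integral {0..1} (\<lambda>s. s\<^sup>2 * cone_slice g face_y s)) (swap12 ` pyramid_x)"
    using has_integral_pyramid_x[OF swapped] pyramid_sub
    by (intro has_integral_swap12_image) (simp_all add: cone_slice_permutations)
  have z: "(g has_integral integral {0..1} (\<lambda>s. s\<^sup>2 * cone_slice g face_z s)) (rotate3 ` pyramid_x)"
    using has_integral_pyramid_x[OF rotated] pyramid_sub
    by (intro has_integral_rotate3_image) (simp_all add: cone_slice_permutations)
  note pieces = unit_cube_pyramid_decomposition
  show "(g has_integral integral {0..1} (\<lambda>s. s\<^sup>2 * cone_slice g face_x s)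
      + integral {0..1} (\<lambda>s. s\<^sup>2 * cone_slice g face_y s)
      + integral {0..1} (\<lambda>s. s\<^sup>2 * cone_slice g face_z s)) unit_cube"
    using has_integral_Un[OF has_integral_Un[OF x y pieces(2)] z pieces(3)] by (simp add: pieces(1))
  show "e \<in> {face_x, face_y, face_z} \<Longrightarrow> (\<lambda>s. s\<^sup>2 * cone_slice g e s) integrable_on {0..1}"
    using has_integral_pyramid_x_interior(2)[OF cont bound] has_integral_pyramid_x_interior(2)[OF swapped]
      has_integral_pyramid_x_interior(2)[OF rotated]
    by (auto simp: cone_slice_permutations)
qed

section \<open>Convexity of the slice integrals\<close>

lemma scaleR_mem_unit_cube: "p \<in> unit_cube \<Longrightarrow> s \<in> {0..1} \<Longrightarrow> s *\<^sub>R p \<in> unit_cube"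
  by (auto simp: unit_cube_def mem_cbox_triple mult_le_one)

lemma unit_cube_faces:
  assumes "e \<in> {face_x, face_y, face_z}"
  shows "\<And>q. q \<in> cbox (0, 0) (1, 1) \<Longrightarrow> e q \<in> unit_cube"
    and "\<And>q q' u v. u + v = 1 \<Longrightarrow> e (u *\<^sub>R q + v *\<^sub>R q') = u *\<^sub>R e q + v *\<^sub>R e q'"
  using assms by (auto simp: face_x_def face_y_def face_z_def unit_cube_def mem_cbox_triple cbox_Pair_eq
      simp flip: scaleR_add_left)

lemma cone_slice_0: "cone_slice g e 0 = g 0"
  by (simp add: cone_slice_def content_Pair)

lemma integrable_cone_slice:
  fixes g :: "real \<times> real \<times> real \<Rightarrow> real" and e :: "real \<times> real \<Rightarrow> real \<times> real \<times> real"
  assumes cvx: "convex_on unit_cube g"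
    and e_cube: "\<And>q. q \<in> cbox (0, 0) (1, 1) \<Longrightarrow> e q \<in> unit_cube"
    and e_affine: "\<And>q q' u v. u + v = 1 \<Longrightarrow> e (u *\<^sub>R q + v *\<^sub>R q') = u *\<^sub>R e q + v *\<^sub>R e q'"
    and s: "s \<in> {0..1}"
  shows "(\<lambda>q. g (s *\<^sub>R e q)) integrable_on cbox (0, 0) (1, 1)"
proof (intro convex_on_cbox_integrable convex_onI)
  fix q q' :: "real \<times> real" and t :: real
  assume q: "q \<in> cbox (0, 0) (1, 1)" "q' \<in> cbox (0, 0) (1, 1)" and t: "0 < t" "t < 1"
  have "s *\<^sub>R e ((1 - t) *\<^sub>R q + t *\<^sub>R q') = (1 - t) *\<^sub>R (s *\<^sub>R e q) + t *\<^sub>R (s *\<^sub>R e q')"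
    by (subst e_affine) (simp_all add: algebra_simps)
  moreover have "g ((1 - t) *\<^sub>R (s *\<^sub>R e q) + t *\<^sub>R (s *\<^sub>R e q')) \<le> (1 - t) * g (s *\<^sub>R e q) + t * g (s *\<^sub>R e q')"
    using s q t by (intro convex_onD[OF cvx] scaleR_mem_unit_cube e_cube) auto
  ultimately show "g (s *\<^sub>R e ((1 - t) *\<^sub>R q + t *\<^sub>R q')) \<le> (1 - t) * g (s *\<^sub>R e q) + t * g (s *\<^sub>R e q')"
    by simp
qed (simp add: convex_box)

lemma convex_on_cone_slice:
  fixes g :: "real \<times> real \<times> real \<Rightarrow> real" and e :: "real \<times> real \<Rightarrow> real \<times> real \<times> real"
  assumes cvx: "convex_on unit_cube g"
    and e_cube: "\<And>q. q \<in> cbox (0, 0) (1, 1) \<Longrightarrow> e q \<in> unit_cube"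
    and e_affine: "\<And>q q' u v. u + v = 1 \<Longrightarrow> e (u *\<^sub>R q + v *\<^sub>R q') = u *\<^sub>R e q + v *\<^sub>R e q'"
  shows "convex_on {0..1} (cone_slice g e)"
proof -
  have ray: "s *\<^sub>R e q \<in> unit_cube" if "s \<in> {0..1}" "q \<in> cbox (0, 0) (1, 1)" for s q
    using that by (intro scaleR_mem_unit_cube e_cube)
  note integrable = integrable_cone_slice[OF cvx e_cube e_affine]
  show ?thesis
  proof (intro convex_onI)
    fix s s' t :: real
    assume s: "s \<in> {0..1}" "s' \<in> {0..1}" and t: "0 < t" "t < 1"
    have "cone_slice g e ((1 - t) *\<^sub>R s + t *\<^sub>R s')
        \<le> integral (cbox (0, 0) (1, 1)) (\<lambda>q. (1 - t) * g (s *\<^sub>R e q) + t * g (s' *\<^sub>R e q))"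
      unfolding cone_slice_def
    proof (rule integral_le)
      have "(1 - t) *\<^sub>R s + t *\<^sub>R s' \<in> {0..1}"
        using s t convexD[OF convex_real_interval(5), of s 0 1 s' "1 - t" t] by auto
      then show "(\<lambda>q. g (((1 - t) *\<^sub>R s + t *\<^sub>R s') *\<^sub>R e q)) integrable_on cbox (0, 0) (1, 1)"
        using integrable by blast
      show "(\<lambda>q. (1 - t) * g (s *\<^sub>R e q) + t * g (s' *\<^sub>R e q)) integrable_on cbox (0, 0) (1, 1)"
        using integrable_on_cmult_left[OF integrable, of _ "1 - t"] integrable_on_cmult_left[OF integrable, of _ t] s
        by (intro integrable_add) simp_all
      fix q :: "real \<times> real" assume "q \<in> cbox (0, 0) (1, 1)"
      then show "g (((1 - t) *\<^sub>R s + t *\<^sub>R s') *\<^sub>R e q) \<le> (1 - t) * g (s *\<^sub>R e q) + t * g (s' *\<^sub>R e q)"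
        using convex_onD[OF cvx, of t "s *\<^sub>R e q" "s' *\<^sub>R e q"] s t ray by (simp add: scaleR_add_left)
    qed
    also have "\<dots> = (1 - t) * cone_slice g e s + t * cone_slice g e s'"
      using integrable_on_cmult_left[OF integrable, of _ "1 - t"] integrable_on_cmult_left[OF integrable, of _ t] s
      by (simp add: cone_slice_def integral_add)
    finally show "cone_slice g e ((1 - t) *\<^sub>R s + t *\<^sub>R s') \<le> (1 - t) * cone_slice g e s + t * cone_slice g e s'" .
  qed (rule convex_real_interval)
qed

lemma convex_on_unit_cube_continuous_bounded:
  fixes g :: "real \<times> real \<times> real \<Rightarrow> real"
  assumes cvx: "convex_on unit_cube g"
  obtains B where "continuous_on (box (0, 0, 0) (1, 1, 1)) g" "\<And>p. p \<in> unit_cube \<Longrightarrow> \<bar>g p\<bar> \<le> B"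
proof -
  have "convex_on (box (0, 0, 0) (1, 1, 1)) g"
    by (rule convex_on_subset[OF cvx]) (auto simp: unit_cube_def box_subset_cbox convex_box)
  then have "continuous_on (box (0, 0, 0) (1, 1, 1)) g"
    by (intro convex_on_continuous) auto
  moreover obtain B where "\<And>p. p \<in> unit_cube \<Longrightarrow> \<bar>g p\<bar> \<le> B"
    using cvx unfolding unit_cube_def by (rule convex_on_cbox_bounded) blast
  ultimately show ?thesis
    using that by blast
qed

lemma cone_slice_square_weight_bounds:
  fixes g :: "real \<times> real \<times> real \<Rightarrow> real"
  assumes cvx: "convex_on unit_cube g" and e: "e \<in> {face_x, face_y, face_z}"
  shows "integral {0..1} (\<lambda>s. s\<^sup>2 * cone_slice g e s) \<le> g 0 / 12 + cone_slice g e 1 / 4"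
    and "cone_slice g e (3/4) \<le> 3 * integral {0..1} (\<lambda>s. s\<^sup>2 * cone_slice g e s)"
proof -
  obtain B where cont: "continuous_on (box (0, 0, 0) (1, 1, 1)) g"
    and bound: "\<And>p. p \<in> unit_cube \<Longrightarrow> \<bar>g p\<bar> \<le> B"
    using convex_on_unit_cube_continuous_bounded[OF cvx] by blast
  have convex: "convex_on {0..1} (cone_slice g e)"
    using convex_on_cone_slice[OF cvx unit_cube_faces[OF e]] .
  have integrable: "(\<lambda>s. s\<^sup>2 * cone_slice g e s) integrable_on {0..1}"
    by (rule has_integral_unit_cube_pyramids(2)[OF cont bound e])
  show "integral {0..1} (\<lambda>s. s\<^sup>2 * cone_slice g e s) \<le> g 0 / 12 + cone_slice g e 1 / 4"
    using integral_square_weight_le_endpoints[OF convex integrable] by (simp add: cone_slice_0)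
  show "cone_slice g e (3/4) \<le> 3 * integral {0..1} (\<lambda>s. s\<^sup>2 * cone_slice g e s)"
    using le_integral_square_weight[OF convex integrable] .
qed

section \<open>Cubes and their faces in space\<close>

definition cube_param :: "real^3 \<Rightarrow> real^3 \<Rightarrow> real^3 \<Rightarrow> real^3 \<Rightarrow> real \<times> real \<times> real \<Rightarrow> real^3" where
  "cube_param A u v w p = A + fst p *\<^sub>R u + fst (snd p) *\<^sub>R v + snd (snd p) *\<^sub>R w"

lemma cube_eq_image_cube_param: "cube A u v w = cube_param A u v w ` unit_cube"
  by (force simp: cube_def cube_param_def unit_cube_def mem_cbox_triple image_iff)

lemma cube_param_affine:
  "u + v = 1 \<Longrightarrow> cube_param A a b c (u *\<^sub>R p + v *\<^sub>R q) = u *\<^sub>R cube_param A a b c p + v *\<^sub>R cube_param A a b c q"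
  by (simp add: cube_param_def algebra_simps flip: scaleR_add_left)

lemma convex_on_cube_param:
  assumes "convex_on (cube A u v w) f"
  shows "convex_on unit_cube (\<lambda>p. f (cube_param A u v w p))"
proof (rule convex_onI)
  fix p q :: "real \<times> real \<times> real" and t :: real
  assume "p \<in> unit_cube" "q \<in> unit_cube" "0 < t" "t < 1"
  then show "f (cube_param A u v w ((1 - t) *\<^sub>R p + t *\<^sub>R q))
      \<le> (1 - t) * f (cube_param A u v w p) + t * f (cube_param A u v w q)"
    by (simp add: cube_param_affine cube_eq_image_cube_param convex_onD[OF assms])
qed (simp add: unit_cube_def)

lemma abs_det_orthogonal_frame:
  fixes u v w :: "real^3"
  assumes orth: "u \<bullet> v = 0" "u \<bullet> w = 0" "v \<bullet> w = 0"
  shows "\<bar>det (matrix (\<lambda>x::real^3. x$1 *\<^sub>R u + x$2 *\<^sub>R v + x$3 *\<^sub>R w))\<bar> = norm u * norm v * norm w"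
proof -
  define M where "M x = x$1 *\<^sub>R u + x$2 *\<^sub>R v + x$3 *\<^sub>R w" for x :: "real^3"
  define X where "X = matrix M"
  define c where "c j = M (axis j 1)" for j
  have columns: "c 1 = u" "c 2 = v" "c 3 = w"
    by (simp_all add: c_def M_def axis_def)
  \<comment> \<open>the Gram matrix \<open>X\<^sup>T X\<close> of the columns is diagonal\<close>
  have gram: "(transpose X ** X) $ i $ j = c i \<bullet> c j" for i j
    by (simp add: matrix_matrix_mult_def transpose_def X_def matrix_def inner_vec_def c_def)
  have "c i \<bullet> c j = 0" if "i \<noteq> j" for i j
    using exhaust_3[of i] exhaust_3[of j] that orth by (auto simp: columns inner_commute)
  then have "det (transpose X ** X) = (\<Prod>i\<in>UNIV. c i \<bullet> c i)"
    by (subst det_diagonal) (simp_all add: gram)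
  also have "\<dots> = (norm u * norm v * norm w)\<^sup>2"
    unfolding UNIV_3 by (simp add: columns power_mult_distrib power2_norm_eq_inner mult.assoc)
  finally have "\<bar>det X\<bar>\<^sup>2 = (norm u * norm v * norm w)\<^sup>2"
    by (simp add: det_mul det_transpose power2_eq_square)
  then show ?thesis
    unfolding X_def M_def[abs_def] by (rule power2_eq_imp_eq) simp_all
qed
lemma has_integral_unit_cube_cart:
  fixes k :: "real \<times> real \<times> real \<Rightarrow> real"
  assumes "(k has_integral J) unit_cube"
  shows "((\<lambda>x::real^3. k (x$1, x$2, x$3)) has_integral J) (cbox (vec 0) (vec 1))"
proof -
  define T :: "real^3 \<Rightarrow> real \<times> real \<times> real" where "T x = (x$1, x$2, x$3)" for x
  define T' :: "real \<times> real \<times> real \<Rightarrow> real^3" where "T' p = vector [fst p, fst (snd p), snd (snd p)]" for p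
  have inverse: "T (T' p) = p" "T' (T x) = x" for p x
    by (simp_all add: T_def T'_def vec_eq_iff forall_3)
  have boxes: "T ` cbox a b = cbox (T a) (T b)" "T' ` cbox c d = cbox (T' c) (T' d)" for a b c d
    by (simp_all add: image_eq_preimage_inverse[of T T'] image_eq_preimage_inverse[of T' T] inverse)
       (auto simp: mem_box_cart(2) forall_3 mem_cbox_triple T_def T'_def)
  have content: "Henstock_Kurzweil_Integration.content (cbox (T a) (T b))
      = Henstock_Kurzweil_Integration.content (cbox a b)" for a b
  proof (cases "a$1 \<le> b$1 \<and> a$2 \<le> b$2 \<and> a$3 \<le> b$3")
    case True
    then have "cbox a b \<noteq> {}"
      by (simp add: interval_ne_empty_cart forall_3)
    then have "Henstock_Kurzweil_Integration.content (cbox a b) = (\<Prod>i\<in>UNIV. b$i - a$i)"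
      by (rule content_cbox_cart)
    also have "\<dots> = (b$1 - a$1) * ((b$2 - a$2) * (b$3 - a$3))"
      unfolding UNIV_3 by (simp add: mult.assoc)
    finally show ?thesis
      using True by (simp add: content_cbox_triple T_def)
  next
    case False
    then have "cbox a b = {}"
      unfolding interval_eq_empty_cart(2) not_le[symmetric] by blast
    with False show ?thesis
      by (auto simp: content_cbox_triple T_def content_real_if)
  qed
  have "((\<lambda>x. k (T x)) has_integral (1 / 1) *\<^sub>R J) (T' ` unit_cube)"
    unfolding unit_cube_def
  proof (rule has_integral_twiddle[where g=T and h=T' and r=1])
    show "\<exists>w z. T ` cbox u v = cbox w z" "\<exists>w z. T' ` cbox u' v' = cbox w z" for u v u' v'
      using boxes by blast+
    show "continuous (at x) T" for x
      unfolding T_def by (intro continuous_intros)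
  qed (use inverse content boxes assms in \<open>simp_all add: unit_cube_def\<close>)
  moreover have "T' ` unit_cube = cbox (vec 0) (vec 1)"
    by (simp add: image_eq_preimage_inverse[of T' T] inverse)
       (auto simp: unit_cube_def mem_box_cart(2) forall_3 mem_cbox_triple T_def)
  ultimately show ?thesis
    by (simp add: T_def)
qed

lemma has_integral_affine_image_cart:
  fixes h :: "real^'m::{finite,wellorder} \<Rightarrow> real" and M :: "real^'m::_ \<Rightarrow> real^'m::_"
  assumes M: "linear M" "det (matrix M) \<noteq> 0" and S: "S \<in> sets lebesgue"
    and abs_int: "(\<lambda>x. h (M x + A)) absolutely_integrable_on S"
    and int: "((\<lambda>x. h (M x + A)) has_integral J) S"
  shows "(h has_integral \<bar>det (matrix M)\<bar> * J) ((\<lambda>x. M x + A) ` S)"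
proof -
  \<comment> \<open>the change of variables theorem is stated for vector-valued integrands\<close>
  define L where "L y = \<bar>det (matrix M)\<bar> *\<^sub>R (vec y :: real^1)" for y :: real
  have L: "bounded_linear L"
    by (rule bounded_linearI') (simp_all add: L_def vec_add vec_scaleR algebra_simps)
  have "(\<lambda>x. \<bar>det (matrix M)\<bar> *\<^sub>R (vec (h (M x + A)) :: real^1)) absolutely_integrable_on S"
    using absolutely_integrable_linear[OF abs_int L] by (simp add: L_def o_def)
  moreover have "integral S (\<lambda>x. \<bar>det (matrix M)\<bar> *\<^sub>R (vec (h (M x + A)) :: real^1))
      = \<bar>det (matrix M)\<bar> *\<^sub>R vec J"
    using integral_unique[OF has_integral_linear[OF int L]] by (simp add: L_def o_def)
  moreover have "((\<lambda>x. M x + A) has_derivative M) (at x within S)" for x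
    by (rule has_derivative_add_const[OF linear_imp_has_derivative[OF M(1)]])
  moreover have "inj_on (\<lambda>x. M x + A) S"
    using M det_nz_iff_inj by (auto simp: inj_on_def inj_def)
  ultimately have "(\<lambda>y. vec (h y) :: real^1) absolutely_integrable_on (\<lambda>x. M x + A) ` S
      \<and> integral ((\<lambda>x. M x + A) ` S) (\<lambda>y. vec (h y) :: real^1) = \<bar>det (matrix M)\<bar> *\<^sub>R vec J"
    using S by (intro has_absolute_integral_change_of_variables[THEN iffD1] conjI)
  then have "((\<lambda>y. vec (h y) :: real^1) has_integral \<bar>det (matrix M)\<bar> *\<^sub>R vec J) ((\<lambda>x. M x + A) ` S)"
    using absolutely_integrable_on_def has_integral_integrable_integral by blast
  from has_integral_linear[OF this bounded_linear_vec_nth[of 1]]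
  show ?thesis by (simp add: o_def)
qed

lemma has_integral_cube:
  fixes h :: "real^3 \<Rightarrow> real"
  assumes orth: "u \<bullet> v = 0" "u \<bullet> w = 0" "v \<bullet> w = 0" and nonzero: "u \<noteq> 0" "v \<noteq> 0" "w \<noteq> 0"
    and int: "((\<lambda>p. h (cube_param A u v w p)) has_integral J) unit_cube"
    and bound: "\<And>p. p \<in> unit_cube \<Longrightarrow> \<bar>h (cube_param A u v w p)\<bar> \<le> B"
  shows "(h has_integral norm u * norm v * norm w * J) (cube A u v w)"
proof -
  define M where "M x = x$1 *\<^sub>R u + x$2 *\<^sub>R v + x$3 *\<^sub>R w" for x :: "real^3"
  define S where "S = cbox (vec 0) (vec 1 :: real^3)"
  have M: "linear M"
    by (simp add: M_def linear_iff algebra_simps)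
  have det: "\<bar>det (matrix M)\<bar> = norm u * norm v * norm w"
    unfolding M_def by (rule abs_det_orthogonal_frame[OF orth])
  have param: "cube_param A u v w (x$1, x$2, x$3) = M x + A" for x
    by (simp add: cube_param_def M_def algebra_simps)
  have "(\<lambda>p. (vector [fst p, fst (snd p), snd (snd p)] :: real^3)) ` unit_cube = S"
    by (force simp: S_def unit_cube_def mem_box_cart(2) forall_3 mem_cbox_triple image_iff vec_eq_iff)
  then have image: "(\<lambda>x. M x + A) ` S = cube A u v w"
    by (force simp: cube_eq_image_cube_param param[symmetric] simp flip: image_comp)
  have int_S: "((\<lambda>x. h (M x + A)) has_integral J) S"
    using has_integral_unit_cube_cart[OF int] by (simp add: S_def param)
  have abs_int: "(\<lambda>x. h (M x + A)) absolutely_integrable_on S"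
  proof (rule absolutely_integrable_integrable_bound)
    show "norm (h (M x + A)) \<le> B" if "x \<in> S" for x
      using bound[of "(x$1, x$2, x$3)"] that
      by (simp add: param S_def unit_cube_def mem_box_cart(2) mem_cbox_triple)
    show "(\<lambda>_. B) integrable_on S"
      unfolding S_def by (rule integrable_const)
  qed (use int_S in auto)
  have "det (matrix M) \<noteq> 0" "S \<in> sets lebesgue"
    using det nonzero by (auto simp: S_def)
  from has_integral_affine_image_cart[OF M this abs_int int_S]
  show ?thesis
    unfolding image det .
qed

lemma vol_avg_cube:
  fixes f :: "real^3 \<Rightarrow> real"
  assumes orth: "u \<bullet> v = 0" "u \<bullet> w = 0" "v \<bullet> w = 0" and nonzero: "u \<noteq> 0" "v \<noteq> 0" "w \<noteq> 0"
    and int: "((\<lambda>p. f (cube_param A u v w p)) has_integral J) unit_cube"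
    and bound: "\<And>p. p \<in> unit_cube \<Longrightarrow> \<bar>f (cube_param A u v w p)\<bar> \<le> B"
  shows "vol_avg f (cube A u v w) = J"
proof -
  have "((\<lambda>_. 1 :: real) has_integral 1) unit_cube"
    using has_integral_const[of "1::real" "(0::real, 0::real, 0::real)" "(1, 1, 1)"]
    by (simp add: unit_cube_def content_cbox_triple)
  then have "((\<lambda>_. 1 :: real) has_integral norm u * norm v * norm w) (cube A u v w)"
    using has_integral_cube[OF orth nonzero, where h="\<lambda>_. 1" and J=1 and B=1] by simp
  moreover have "cube A u v w \<in> lmeasurable"
    unfolding cube_eq_image_cube_param cube_param_def unit_cube_def
    by (intro lmeasurable_compact compact_continuous_image continuous_intros compact_cbox)
  ultimately have "measure lebesgue (cube A u v w) = norm u * norm v * norm w"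
    using lmeasure_integral integral_unique by metis
  then show ?thesis
    using integral_unique[OF has_integral_cube[OF orth nonzero int bound]] nonzero
    by (simp add: vol_avg_def)
qed

lemma face_area_orthogonal: "x \<bullet> y = 0 \<Longrightarrow> face_area (P, x, y) = norm x * norm y"
  by (simp add: face_area_def real_sqrt_mult)

lemma face_area_homothety_face: "face_area (homothety_face A lam F) = lam\<^sup>2 * face_area F"
proof -
  have "(\<bar>lam\<bar> * norm x)\<^sup>2 * (\<bar>lam\<bar> * norm y)\<^sup>2 - (lam * (lam * (x \<bullet> y)))\<^sup>2
      = (lam\<^sup>2)\<^sup>2 * ((norm x)\<^sup>2 * (norm y)\<^sup>2 - (x \<bullet> y)\<^sup>2)" for x y :: "real^3"
    by (simp add: power_mult_distrib power2_abs algebra_simps)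
  moreover have "sqrt (lam ^ 4) = lam\<^sup>2"
    using real_sqrt_abs[of "lam\<^sup>2"] by (simp flip: power_mult)
  ultimately show ?thesis
    by (cases F) (simp add: face_area_def homothety_face_def real_sqrt_mult)
qed

lemma homothety_face_1: "homothety_face A 1 = (\<lambda>F. F)"
  by (auto simp: fun_eq_iff homothety_face_def homothety_def)

lemma surface_avg_equal_areas:
  assumes "\<And>F. F \<in> set Fs \<Longrightarrow> face_area F = c" and "c \<noteq> 0"
  shows "surface_avg f Fs = (\<Sum>F\<leftarrow>Fs. integral (cbox (0, 0) (1, 1)) (\<lambda>q. f (face_param F q))) / length Fs"
proof -
  have "(\<Sum>F\<leftarrow>Fs. face_integral f F) = c * (\<Sum>F\<leftarrow>Fs. integral (cbox (0, 0) (1, 1)) (\<lambda>q. f (face_param F q)))"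
    using assms(1) by (simp add: face_integral_def sum_list_const_mult[symmetric] cong: map_cong)
  moreover have "(\<Sum>F\<leftarrow>Fs. face_area F) = c * length Fs"
    using assms(1) by (simp add: sum_list_triv cong: map_cong)
  ultimately show ?thesis
    using assms(2) by (simp add: surface_avg_def)
qed

lemma face_param_homothety_far_faces:
  "map (\<lambda>F. face_param (homothety_face A lam F) q) (far_faces A u v w)
    = map (\<lambda>e. cube_param A u v w (lam *\<^sub>R e q)) [face_x, face_y, face_z]"
  unfolding far_faces_def by (simp add: face_param_homothety)
    (simp add: face_param_def homothety_def cube_param_def face_x_def face_y_def face_z_def algebra_simps)

lemma surface_avg_homothety_far_faces:
  assumes orth: "u \<bullet> v = 0" "u \<bullet> w = 0" "v \<bullet> w = 0" and "norm u = norm v" "norm v = norm w"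
    and "u \<noteq> 0" "lam \<noteq> 0"
  shows "surface_avg f (map (homothety_face A lam) (far_faces A u v w))
    = (\<Sum>e\<leftarrow>[face_x, face_y, face_z]. cone_slice (\<lambda>p. f (cube_param A u v w p)) e lam) / 3"
proof -
  have "face_area F = (norm u)\<^sup>2" if "F \<in> set (far_faces A u v w)" for F
    using that assms by (auto simp: far_faces_def face_area_orthogonal inner_commute power2_eq_square)
  then have "surface_avg f (map (homothety_face A lam) (far_faces A u v w))
      = (\<Sum>F\<leftarrow>far_faces A u v w. integral (cbox (0, 0) (1, 1)) (\<lambda>q. f (face_param (homothety_face A lam F) q))) / 3"
    using assms by (subst surface_avg_equal_areas[where c="lam\<^sup>2 * (norm u)\<^sup>2"])
      (auto simp: face_area_homothety_face o_def, simp add: far_faces_def)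
  also have "\<dots> = (\<Sum>e\<leftarrow>[face_x, face_y, face_z]. cone_slice (\<lambda>p. f (cube_param A u v w p)) e lam) / 3"
    using face_param_homothety_far_faces[of A lam _ u v w]
    by (simp add: far_faces_def cone_slice_def)
  finally show ?thesis .
qed

lemma vol_avg_cube_pyramids:
  fixes f :: "real^3 \<Rightarrow> real"
  assumes orth: "u \<bullet> v = 0" "u \<bullet> w = 0" "v \<bullet> w = 0" and nonzero: "u \<noteq> 0" "v \<noteq> 0" "w \<noteq> 0"
    and cvx: "convex_on (cube A u v w) f"
  shows "vol_avg f (cube A u v w) = (\<Sum>e\<leftarrow>[face_x, face_y, face_z].
    integral {0..1} (\<lambda>s. s\<^sup>2 * cone_slice (\<lambda>p. f (cube_param A u v w p)) e s))"
proof -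
  obtain B where cont: "continuous_on (box (0, 0, 0) (1, 1, 1)) (\<lambda>p. f (cube_param A u v w p))"
    and bound: "\<And>p. p \<in> unit_cube \<Longrightarrow> \<bar>f (cube_param A u v w p)\<bar> \<le> B"
    using convex_on_unit_cube_continuous_bounded[OF convex_on_cube_param[OF cvx]] by blast
  show ?thesis
    using vol_avg_cube[OF orth nonzero has_integral_unit_cube_pyramids(1)[OF cont bound] bound]
    by (simp add: add.assoc)
qed

theorem theorem8p4:
  fixes A u v w :: "real^3" and f :: "real^3 \<Rightarrow> real"
  assumes "u \<bullet> v = 0" and "u \<bullet> w = 0" and "v \<bullet> w = 0"
    and "norm u = norm v" and "norm v = norm w" and "u \<noteq> 0"
    and "convex_on (cube A u v w) f"
  shows "vol_avg f (cube A u v w) \<le> 1/4 * f A + 3/4 * surface_avg f (far_faces A u v w)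
       \<and> surface_avg f (map (homothety_face A (3/4)) (far_faces A u v w)) \<le> vol_avg f (cube A u v w)"
proof -
  define G where "G = (\<lambda>p. f (cube_param A u v w p))"
  have cvx: "convex_on unit_cube G"
    unfolding G_def by (rule convex_on_cube_param[OF assms(7)])
  have apex: "G 0 = f A"
    by (simp add: G_def cube_param_def)
  have volume: "vol_avg f (cube A u v w)
      = (\<Sum>e\<leftarrow>[face_x, face_y, face_z]. integral {0..1} (\<lambda>s. s\<^sup>2 * cone_slice G e s))"
    unfolding G_def using assms by (intro vol_avg_cube_pyramids) auto
  have surface: "surface_avg f (map (homothety_face A lam) (far_faces A u v w))
      = (\<Sum>e\<leftarrow>[face_x, face_y, face_z]. cone_slice G e lam) / 3" if "lam \<noteq> 0" for lam
    unfolding G_def using assms that by (intro surface_avg_homothety_far_faces) auto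
  show ?thesis
    using apex volume surface[of 1] surface[of "3/4"] cone_slice_square_weight_bounds[OF cvx, of face_x] cone_slice_square_weight_bounds[OF cvx, of face_y]
      cone_slice_square_weight_bounds[OF cvx, of face_z]
    by (simp add: homothety_face_1)
qed

end
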